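(* Let $\nu$ and $\nu'$ be $k$-atomic distributions supported on $[-1,1]$. If $|m_i(\nu)-m_i(\nu')|\le\delta$ for $i=1,\dots,2k-1$, then \[W_1(\nu,\nu')\le O\big(k\delta^{\frac{1}{2k-1}}\big).\]
   Context: A $k$-atomic distribution is a discrete distribution supported on (at most) $k$ points. $m_i(\pi)=\mathbb{E}_\pi X^i$. $W_1$ is the 1-Wasserstein distance: $W_1(\nu,\nu')=\inf\mathbb{E}|X-Y|$ over couplings of $\nu,\nu'$. $O(\cdot)$ hides an absolute constant. *)

theory Defs
  imports "HOL-Probability.Probability"
begin

definition k_atomic :: "nat \<Rightarrow> real pmf \<Rightarrow> bool" where
  "k_atomic k p \<longleftrightarrow> finite (set_pmf p) \<and> card (set_pmf p) \<le> k"

definition moment :: "nat \<Rightarrow> real pmf \<Rightarrow> real" where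
  "moment i p = measure_pmf.expectation p (\<lambda>x. x ^ i)"

text \<open>Couplings of two discrete distributions (any coupling of discrete
  measures is itself discrete, so pmfs on the product suffice).\<close>
definition couplings :: "real pmf \<Rightarrow> real pmf \<Rightarrow> (real \<times> real) pmf set" where
  "couplings p q = {c. map_pmf fst c = p \<and> map_pmf snd c = q}"

definition W1 :: "real pmf \<Rightarrow> real pmf \<Rightarrow> real" where
  "W1 p q = Inf ((\<lambda>c. measure_pmf.expectation c (\<lambda>(x, y). \<bar>x - y\<bar>)) ` couplings p q)"

end

theory Submission
  imports Defs "HOL-Computational_Algebra.Polynomial"
begin

text \<open>Put both supports on a common grid x_0 < ... < x_(m-1) with m <= 2k, let w_i be the difference
  of the two masses at x_i and H_l = w_0 + ... + w_l. The quantile coupling gives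
  W1 <= sum_l (x_(l+1) - x_l) |H_l|, so it suffices to bound every term by 8 delta^(1/(2k-1)).

  Let p be the polynomial whose roots are the nodes where H changes sign, signed so that p has the
  sign of H_l on every gap (x_l, x_(l+1)), and let P be its antiderivative. Summation by parts gives
  -sum_i w_i P(x_i) = sum_l H_l (P(x_(l+1)) - P(x_l)), a sum of nonnegative terms, the l-th of which
  is at least |H_l| (h/2) (h/4)^c for the gap length h and c = deg p < m - 1. On the other hand P
  has degree at most 2k - 1 and coefficients of total size at most 2^c, so the moment hypothesis
  bounds the same sum by 2^c delta.\<close>

section \<open>The quantile coupling of two distributions on a grid\<close>

definition interval_overlap :: "real \<Rightarrow> real \<Rightarrow> real \<Rightarrow> real \<Rightarrow> real" where
  "interval_overlap a b c d = max 0 (min b d - max a c)"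

lemma interval_overlap_nonneg: "0 \<le> interval_overlap a b c d"
  by (simp add: interval_overlap_def)

lemma interval_overlap_commute: "interval_overlap a b c d = interval_overlap c d a b"
  by (simp add: interval_overlap_def min.commute max.commute)

lemma interval_overlap_degenerate: "interval_overlap a a c d = 0" "interval_overlap a b c c = 0"
  by (simp_all add: interval_overlap_def)

lemma sum_interval_overlap_telescope:
  assumes "mono f" "a \<le> b"
  shows "(\<Sum>j<n. interval_overlap a b (f j) (f (Suc j))) = interval_overlap a b (f 0) (f n)"
proof (induction n)
  case 0
  then show ?case
    by (simp add: interval_overlap_def)
next
  case (Suc n)
  have "f 0 \<le> f n" "f n \<le> f (Suc n)"
    using assms(1) by (auto simp: mono_def)
  with Suc assms(2) show ?case
    by (simp add: interval_overlap_def split: split_max split_min)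
qed

lemma sum_sum_interval_overlap:
  assumes "mono F" "mono G" "F 0 = 0" "G 0 = 0"
  shows "(\<Sum>i<a. \<Sum>j<b. interval_overlap (F i) (F (Suc i)) (G j) (G (Suc j))) = min (F a) (G b)"
proof -
  have "(\<Sum>i<a. \<Sum>j<b. interval_overlap (F i) (F (Suc i)) (G j) (G (Suc j)))
      = (\<Sum>i<a. interval_overlap (G 0) (G b) (F i) (F (Suc i)))"
    using assms by (simp add: sum_interval_overlap_telescope monoD interval_overlap_commute)
  also have "\<dots> = interval_overlap (G 0) (G b) (F 0) (F a)"
    using assms monoD[OF assms(2), of 0 b] by (intro sum_interval_overlap_telescope) auto
  also have "\<dots> = min (F a) (G b)"
    using assms monoD[OF assms(1), of 0 a] monoD[OF assms(2), of 0 b]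
    by (simp add: interval_overlap_def)
  finally show ?thesis .
qed

definition cumulative :: "nat pmf \<Rightarrow> nat \<Rightarrow> real" where
  "cumulative p j = (\<Sum>i<j. pmf p i)"

lemma cumulative_0 [simp]: "cumulative p 0 = 0"
  by (simp add: cumulative_def)

lemma cumulative_Suc: "cumulative p (Suc j) = cumulative p j + pmf p j"
  by (simp add: cumulative_def)

lemma mono_cumulative: "mono (cumulative p)"
  unfolding cumulative_def by (auto intro!: monoI sum_mono2)

lemma cumulative_nonneg: "0 \<le> cumulative p j"
  by (simp add: cumulative_def sum_nonneg)

lemma cumulative_le_1: "cumulative p j \<le> 1"
  using measure_pmf.prob_le_1[of p "{..<j}"] by (simp add: cumulative_def measure_measure_pmf_finite)

lemma cumulative_eq_1: "set_pmf p \<subseteq> {..<m} \<Longrightarrow> m \<le> j \<Longrightarrow> cumulative p j = 1"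
  unfolding cumulative_def by (auto intro!: sum_pmf_eq_1)

definition quantile_coupling :: "nat pmf \<Rightarrow> nat pmf \<Rightarrow> (nat \<times> nat) pmf" where
  "quantile_coupling p q = embed_pmf (\<lambda>(i, j).
     interval_overlap (cumulative p i) (cumulative p (Suc i)) (cumulative q j) (cumulative q (Suc j)))"

definition separated_by :: "nat \<Rightarrow> (nat \<times> nat) set" where
  "separated_by l = {(i, j). (i \<le> l) \<noteq> (j \<le> l)}"

lemma pmf_map_finite_support:
  assumes "finite A" "set_pmf p \<subseteq> A"
  shows "pmf (map_pmf f p) u = (\<Sum>a\<in>{a\<in>A. f a = u}. pmf p a)"
proof -
  have "pmf (map_pmf f p) u = measure p (f -` {u} \<inter> set_pmf p)"
    by (simp add: pmf_map measure_Int_set_pmf)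
  also have "\<dots> = (\<Sum>a\<in>f -` {u} \<inter> set_pmf p. pmf p a)"
    using assms by (intro measure_measure_pmf_finite) (auto intro: finite_subset)
  also have "\<dots> = (\<Sum>a\<in>{a\<in>A. f a = u}. pmf p a)"
    using assms by (intro sum.mono_neutral_left) (auto simp: set_pmf_eq)
  finally show ?thesis .
qed

context
  fixes p q :: "nat pmf" and m :: nat
  assumes support_p: "set_pmf p \<subseteq> {..<m}" and support_q: "set_pmf q \<subseteq> {..<m}"
begin

lemma pmf_quantile_coupling:
  "pmf (quantile_coupling p q) (i, j)
    = interval_overlap (cumulative p i) (cumulative p (Suc i)) (cumulative q j) (cumulative q (Suc j))"
proof -
  define \<gamma> where "\<gamma> = (\<lambda>(i, j). interval_overlap (cumulative p i) (cumulative p (Suc i))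
    (cumulative q j) (cumulative q (Suc j)))"
  have outside: "\<gamma> ij = 0" if "ij \<notin> {..<m} \<times> {..<m}" for ij
  proof -
    obtain i j where ij: "ij = (i, j)"
      by fastforce
    have "pmf p i = 0 \<or> pmf q j = 0"
      using that support_p support_q by (auto simp: set_pmf_eq ij)
    then show ?thesis
      by (auto simp: \<gamma>_def ij cumulative_Suc interval_overlap_degenerate)
  qed
  have "(\<integral>\<^sup>+ij. ennreal (\<gamma> ij) \<partial>count_space UNIV) = (\<Sum>ij\<in>{..<m} \<times> {..<m}. ennreal (\<gamma> ij))"
    using outside by (intro nn_integral_count_space') auto
  also have "\<dots> = ennreal (\<Sum>ij\<in>{..<m} \<times> {..<m}. \<gamma> ij)"
    by (simp add: \<gamma>_def interval_overlap_nonneg split_beta)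
  also have "(\<Sum>ij\<in>{..<m} \<times> {..<m}. \<gamma> ij) = min (cumulative p m) (cumulative q m)"
    using sum_sum_interval_overlap[OF mono_cumulative mono_cumulative cumulative_0 cumulative_0]
    by (simp add: \<gamma>_def flip: sum.cartesian_product)
  also have "\<dots> = 1"
    using support_p support_q by (simp add: cumulative_eq_1)
  finally show ?thesis
    unfolding quantile_coupling_def by (subst pmf_embed_pmf) (auto simp: \<gamma>_def interval_overlap_nonneg)
qed

lemma set_pmf_quantile_coupling: "set_pmf (quantile_coupling p q) \<subseteq> {..<m} \<times> {..<m}"
proof
  fix ij
  assume "ij \<in> set_pmf (quantile_coupling p q)"
  moreover obtain i j where ij: "ij = (i, j)"
    by fastforce
  ultimately have "pmf p i \<noteq> 0" "pmf q j \<noteq> 0"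
    by (auto simp: set_pmf_eq pmf_quantile_coupling cumulative_Suc interval_overlap_degenerate)
  then show "ij \<in> {..<m} \<times> {..<m}"
    using support_p support_q by (auto simp: ij set_pmf_eq)
qed

lemma sum_pmf_quantile_coupling_rectangle:
  "(\<Sum>i<a. \<Sum>j<b. pmf (quantile_coupling p q) (i, j)) = min (cumulative p a) (cumulative q b)"
  using sum_sum_interval_overlap[OF mono_cumulative mono_cumulative cumulative_0 cumulative_0]
  by (simp add: pmf_quantile_coupling)

lemma map_fst_quantile_coupling: "map_pmf fst (quantile_coupling p q) = p"
proof (rule pmf_eqI)
  fix i
  have "pmf (map_pmf fst (quantile_coupling p q)) i
      = (\<Sum>ij\<in>{ij\<in>{..<m} \<times> {..<m}. fst ij = i}. pmf (quantile_coupling p q) ij)"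
    by (simp add: pmf_map_finite_support[OF _ set_pmf_quantile_coupling])
  also have "\<dots> = (\<Sum>j<m. pmf (quantile_coupling p q) (i, j))"
    using set_pmf_quantile_coupling
    by (subst sum.cartesian_product'[of _ "{i}", simplified, symmetric], intro sum.mono_neutral_left)
      (auto simp: set_pmf_eq)
  also have "\<dots> = min (cumulative p (Suc i)) (cumulative q m) - min (cumulative p i) (cumulative q m)"
    by (simp flip: sum_pmf_quantile_coupling_rectangle)
  also have "\<dots> = pmf p i"
    using support_q cumulative_le_1[of p i] cumulative_le_1[of p "Suc i"]
    by (simp add: cumulative_eq_1 cumulative_Suc)
  finally show "pmf (map_pmf fst (quantile_coupling p q)) i = pmf p i" .
qed

lemma map_snd_quantile_coupling: "map_pmf snd (quantile_coupling p q) = q"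
proof (rule pmf_eqI)
  fix j
  have "pmf (map_pmf snd (quantile_coupling p q)) j
      = (\<Sum>ij\<in>{ij\<in>{..<m} \<times> {..<m}. snd ij = j}. pmf (quantile_coupling p q) ij)"
    by (simp add: pmf_map_finite_support[OF _ set_pmf_quantile_coupling])
  also have "\<dots> = (\<Sum>i<m. pmf (quantile_coupling p q) (i, j))"
    using set_pmf_quantile_coupling
    by (subst sum.cartesian_product'[of _ _ "{j}", simplified, symmetric], intro sum.mono_neutral_left)
      (auto simp: set_pmf_eq)
  also have "\<dots> = min (cumulative p m) (cumulative q (Suc j)) - min (cumulative p m) (cumulative q j)"
    by (simp add: sum.distrib flip: sum_pmf_quantile_coupling_rectangle)
  also have "\<dots> = pmf q j"
    using support_p cumulative_le_1[of q j] cumulative_le_1[of q "Suc j"]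
    by (simp add: cumulative_eq_1 cumulative_Suc)
  finally show "pmf (map_pmf snd (quantile_coupling p q)) j = pmf q j" .
qed

lemma measure_quantile_coupling_separated_by:
  assumes "l < m"
  shows "measure (quantile_coupling p q) (separated_by l) = \<bar>cumulative p (Suc l) - cumulative q (Suc l)\<bar>"
proof -
  let ?c = "quantile_coupling p q"
  define L where "L = {..<Suc l}"
  have rectangle: "(\<Sum>ij\<in>{..<a} \<times> {..<b}. pmf ?c ij) = min (cumulative p a) (cumulative q b)" for a b
    by (simp add: sum.cartesian_product' sum_pmf_quantile_coupling_rectangle)
  have "measure ?c (separated_by l) = measure ?c (separated_by l \<inter> {..<m} \<times> {..<m})"
    using set_pmf_quantile_coupling by (metis measure_Int_set_pmf inf.absorb_iff2 inf_assoc)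
  also have "separated_by l \<inter> {..<m} \<times> {..<m} = (L \<times> {..<m} - L \<times> L) \<union> ({..<m} \<times> L - L \<times> L)"
    using assms by (auto simp: separated_by_def L_def)
  also have "measure ?c \<dots> = (\<Sum>ij\<in>L \<times> {..<m} - L \<times> L. pmf ?c ij) + (\<Sum>ij\<in>{..<m} \<times> L - L \<times> L. pmf ?c ij)"
    by (simp add: measure_measure_pmf_finite L_def) (rule sum.union_disjoint; auto)
  also have "\<dots> = (\<Sum>ij\<in>L \<times> {..<m}. pmf ?c ij) - (\<Sum>ij\<in>L \<times> L. pmf ?c ij)
      + ((\<Sum>ij\<in>{..<m} \<times> L. pmf ?c ij) - (\<Sum>ij\<in>L \<times> L. pmf ?c ij))"
    using assms by (subst (1 2) sum_diff) (auto simp: L_def)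
  also have "\<dots> = \<bar>cumulative p (Suc l) - cumulative q (Suc l)\<bar>"
    using support_p support_q cumulative_le_1[of p] cumulative_le_1[of q]
    by (simp add: rectangle L_def cumulative_eq_1)
  finally show ?thesis .
qed

end

lemma W1_le_coupling_cost:
  assumes "c \<in> couplings \<mu> \<nu>"
  shows "W1 \<mu> \<nu> \<le> measure_pmf.expectation c (\<lambda>(x, y). \<bar>x - y\<bar>)"
  unfolding W1_def
proof (rule cInf_lower)
  show "bdd_below ((\<lambda>c. measure_pmf.expectation c (\<lambda>(x, y). \<bar>x - y\<bar>)) ` couplings \<mu> \<nu>)"
    by (rule bdd_belowI[of _ 0]) (auto intro!: integral_nonneg_AE)
qed (use assms in blast)

lemma abs_diff_le_sum_separating_gaps:
  fixes x :: "nat \<Rightarrow> real"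
  assumes "i < m" "j < m"
  shows "\<bar>x i - x j\<bar> \<le> (\<Sum>l<m - 1. \<bar>x (Suc l) - x l\<bar> * indicator (separated_by l) (i, j))"
proof -
  have ordered: "\<bar>x i - x j\<bar> \<le> (\<Sum>l<m - 1. \<bar>x (Suc l) - x l\<bar> * indicator (separated_by l) (i, j))"
    if "i \<le> j" "j < m" for i j
  proof -
    have "\<bar>x i - x j\<bar> = \<bar>\<Sum>l=i..<j. x (Suc l) - x l\<bar>"
      using that by (simp add: sum_Suc_diff' abs_minus_commute)
    also have "\<dots> \<le> (\<Sum>l=i..<j. \<bar>x (Suc l) - x l\<bar>)"
      by (rule sum_abs)
    also have "\<dots> = (\<Sum>l<m - 1. \<bar>x (Suc l) - x l\<bar> * indicator (separated_by l) (i, j))"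
    proof -
      have "{..<m - 1} \<inter> {l. (i, j) \<in> separated_by l} = {i..<j}"
        using that by (auto simp: separated_by_def)
      then show ?thesis
        by (simp add: indicator_def sum.If_cases)
    qed
    finally show ?thesis .
  qed
  have "indicator (separated_by l) (i, j) = (indicator (separated_by l) (j, i) :: real)" for l
    by (auto simp: separated_by_def indicator_def)
  then show ?thesis
    using assms ordered[of i j] ordered[of j i] by (cases "i \<le> j") (simp_all add: abs_minus_commute)
qed

lemma W1_map_pmf_le_sum_gaps:
  fixes p q :: "nat pmf" and x :: "nat \<Rightarrow> real"
  assumes p: "set_pmf p \<subseteq> {..<m}" and q: "set_pmf q \<subseteq> {..<m}"
  shows "W1 (map_pmf x p) (map_pmf x q)
    \<le> (\<Sum>l<m - 1. \<bar>x (Suc l) - x l\<bar> * \<bar>cumulative p (Suc l) - cumulative q (Suc l)\<bar>)"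
proof -
  define c where "c = quantile_coupling p q"
  have support: "set_pmf c \<subseteq> {..<m} \<times> {..<m}"
    unfolding c_def using p q by (rule set_pmf_quantile_coupling)
  then have "finite (set_pmf c)"
    by (rule finite_subset) auto
  have "map_pmf fst c = p" "map_pmf snd c = q"
    unfolding c_def using p q by (rule map_fst_quantile_coupling, rule map_snd_quantile_coupling)
  then have "map_pmf (map_prod x x) c \<in> couplings (map_pmf x p) (map_pmf x q)"
    by (auto simp: couplings_def map_pmf_comp)
  then have "W1 (map_pmf x p) (map_pmf x q) \<le> measure_pmf.expectation c (\<lambda>(i, j). \<bar>x i - x j\<bar>)"
    by (auto dest: W1_le_coupling_cost simp: split_beta')
  also have "\<dots> \<le> measure_pmf.expectation c
      (\<lambda>ij. \<Sum>l<m - 1. \<bar>x (Suc l) - x l\<bar> * indicator (separated_by l) ij)"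
  proof (rule integral_mono_AE)
    show "integrable c (\<lambda>(i, j). \<bar>x i - x j\<bar>)"
      "integrable c (\<lambda>ij. \<Sum>l<m - 1. \<bar>x (Suc l) - x l\<bar> * indicator (separated_by l) ij)"
      using \<open>finite (set_pmf c)\<close> by (simp_all add: integrable_measure_pmf_finite)
    show "AE ij in c. (\<lambda>(i, j). \<bar>x i - x j\<bar>) ij
        \<le> (\<Sum>l<m - 1. \<bar>x (Suc l) - x l\<bar> * indicator (separated_by l) ij)"
    proof (unfold AE_measure_pmf_iff, intro ballI)
      fix ij
      assume "ij \<in> set_pmf c"
      then obtain i j where "ij = (i, j)" "i < m" "j < m"
        using support by auto
      then show "(\<lambda>(i, j). \<bar>x i - x j\<bar>) ij
          \<le> (\<Sum>l<m - 1. \<bar>x (Suc l) - x l\<bar> * indicator (separated_by l) ij)"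
        using abs_diff_le_sum_separating_gaps[of i m j x] by simp
    qed
  qed
  also have "\<dots> = (\<Sum>l<m - 1. \<bar>x (Suc l) - x l\<bar> * measure c (separated_by l))"
    using \<open>finite (set_pmf c)\<close>
    by (subst Bochner_Integration.integral_sum)
      (simp_all add: integrable_measure_pmf_finite del: sum_mult_indicator)
  also have "\<dots> = (\<Sum>l<m - 1. \<bar>x (Suc l) - x l\<bar> * \<bar>cumulative p (Suc l) - cumulative q (Suc l)\<bar>)"
    by (intro sum.cong refl) (simp add: c_def measure_quantile_coupling_separated_by[OF p q])
  finally show ?thesis .
qed

section \<open>Polynomials with prescribed signs on the gaps of a grid\<close>

lemma sum_abs_coeff_linear_mult_le:
  fixes p :: "'a::linordered_idom poly"
  shows "(\<Sum>i\<le>n. \<bar>coeff ([:c, 1:] * p) i\<bar>) \<le> (\<bar>c\<bar> + 1) * (\<Sum>i\<le>n. \<bar>coeff p i\<bar>)"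
proof -
  have shift: "(\<Sum>i\<le>n. \<bar>coeff (pCons 0 p) i\<bar>) \<le> (\<Sum>i\<le>n. \<bar>coeff p i\<bar>)"
  proof (cases n)
    case (Suc n')
    have "(\<Sum>i\<le>n. \<bar>coeff (pCons 0 p) i\<bar>) = (\<Sum>i\<le>n'. \<bar>coeff p i\<bar>)"
      unfolding Suc by (subst sum.atMost_Suc_shift) simp
    also have "\<dots> \<le> (\<Sum>i\<le>n. \<bar>coeff p i\<bar>)"
      unfolding Suc by (intro sum_mono2) auto
    finally show ?thesis .
  qed simp
  have "(\<Sum>i\<le>n. \<bar>coeff ([:c, 1:] * p) i\<bar>)
      \<le> (\<Sum>i\<le>n. \<bar>c\<bar> * \<bar>coeff p i\<bar> + \<bar>coeff (pCons 0 p) i\<bar>)"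
    by (intro sum_mono) (simp add: abs_mult [symmetric] abs_triangle_ineq)
  also have "\<dots> \<le> (\<bar>c\<bar> + 1) * (\<Sum>i\<le>n. \<bar>coeff p i\<bar>)"
    using shift by (simp add: sum.distrib sum_distrib_left distrib_right)
  finally show ?thesis .
qed

lemma sum_abs_coeff_prod_linear_le:
  fixes z :: "'a \<Rightarrow> real"
  assumes "\<And>a. a \<in> A \<Longrightarrow> \<bar>z a\<bar> \<le> 1"
  shows "(\<Sum>i\<le>n. \<bar>coeff (\<Prod>a\<in>A. [:- z a, 1:]) i\<bar>) \<le> 2 ^ card A"
  using assms
proof (induction A rule: infinite_finite_induct)
  case (infinite A)
  then show ?case
    by simp
next
  case empty
  then show ?case
    by simp
next
  case (insert b A)
  have "(\<Sum>i\<le>n. \<bar>coeff (\<Prod>a\<in>insert b A. [:- z a, 1:]) i\<bar>)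
      \<le> (\<bar>z b\<bar> + 1) * (\<Sum>i\<le>n. \<bar>coeff (\<Prod>a\<in>A. [:- z a, 1:]) i\<bar>)"
    using insert.hyps sum_abs_coeff_linear_mult_le[where c="- z b"] by simp
  also have "\<dots> \<le> 2 * 2 ^ card A"
    using insert by (intro mult_mono) (auto simp: sum_nonneg)
  finally show ?case
    using insert.hyps by simp
qed

definition poly_antideriv :: "'a::field_char_0 poly \<Rightarrow> 'a poly" where
  "poly_antideriv p = (\<Sum>i\<le>degree p. monom (coeff p i / of_nat (Suc i)) (Suc i))"

lemma coeff_poly_antideriv:
  "coeff (poly_antideriv p) 0 = 0"
  "coeff (poly_antideriv p) (Suc i) = coeff p i / of_nat (Suc i)"
  by (auto simp: poly_antideriv_def coeff_sum coeff_monom coeff_eq_0)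

lemma pderiv_poly_antideriv: "pderiv (poly_antideriv p) = p"
  by (rule poly_eqI) (simp add: coeff_pderiv coeff_poly_antideriv del: of_nat_Suc)

lemma degree_poly_antideriv_le: "degree (poly_antideriv p) \<le> Suc (degree p)"
  unfolding poly_antideriv_def by (intro degree_sum_le) (auto intro: order.trans[OF degree_monom_le])

lemma sum_abs_coeff_poly_antideriv_le:
  fixes p :: "'a::linordered_field poly"
  shows "(\<Sum>i\<le>Suc n. \<bar>coeff (poly_antideriv p) i\<bar>) \<le> (\<Sum>i\<le>n. \<bar>coeff p i\<bar>)"
proof -
  have "(\<Sum>i\<le>Suc n. \<bar>coeff (poly_antideriv p) i\<bar>) = (\<Sum>i\<le>n. \<bar>coeff p i\<bar> / of_nat (Suc i))"
    by (subst sum.atMost_Suc_shift) (simp add: coeff_poly_antideriv del: of_nat_Suc)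
  also have "\<dots> \<le> (\<Sum>i\<le>n. \<bar>coeff p i\<bar>)"
  proof (intro sum_mono)
    fix i
    show "\<bar>coeff p i\<bar> / of_nat (Suc i) \<le> \<bar>coeff p i\<bar>"
      by (simp add: divide_le_eq mult_le_cancel_left1 add_pos_nonneg)
  qed
  finally show ?thesis .
qed

lemma abs_sum_poly_le_moment_bound:
  fixes P :: "real poly" and w x :: "'a \<Rightarrow> real"
  assumes "degree P \<le> n" and moments: "\<And>r. r \<le> n \<Longrightarrow> \<bar>\<Sum>i\<in>I. w i * x i ^ r\<bar> \<le> \<delta>"
  shows "\<bar>\<Sum>i\<in>I. w i * poly P (x i)\<bar> \<le> (\<Sum>r\<le>n. \<bar>coeff P r\<bar>) * \<delta>"
proof -
  have "poly P y = poly (\<Sum>r\<le>n. monom (coeff P r) r) y" for y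
    by (simp only: poly_as_sum_of_monoms'[OF assms(1)])
  then have "(\<Sum>i\<in>I. w i * poly P (x i)) = (\<Sum>i\<in>I. \<Sum>r\<le>n. w i * (coeff P r * x i ^ r))"
    by (simp add: poly_sum poly_monom sum_distrib_left)
  also have "\<dots> = (\<Sum>r\<le>n. coeff P r * (\<Sum>i\<in>I. w i * x i ^ r))"
    by (subst sum.swap) (simp add: sum_distrib_left mult_ac)
  also have "\<bar>\<dots>\<bar> \<le> (\<Sum>r\<le>n. \<bar>coeff P r\<bar> * \<delta>)"
    by (rule order.trans[OF sum_abs sum_mono]) (simp add: abs_mult mult_left_mono moments)
  finally show ?thesis
    by (simp add: sum_distrib_right)
qed

lemma prod_diff_eq_sign_prod_abs:
  fixes z :: "'a \<Rightarrow> real"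
  assumes "finite A"
  shows "(\<Prod>a\<in>A. t - z a) = (-1) ^ card {a\<in>A. t < z a} * (\<Prod>a\<in>A. \<bar>t - z a\<bar>)"
  using assms
proof (induction A rule: finite_induct)
  case (insert b A)
  show ?case
  proof (cases "t < z b")
    case True
    then have "{a\<in>insert b A. t < z a} = insert b {a\<in>A. t < z a}"
      by auto
    then have "card {a\<in>insert b A. t < z a} = Suc (card {a\<in>A. t < z a})"
      using insert by simp
    with insert True show ?thesis
      by (simp add: abs_if algebra_simps)
  next
    case False
    then have "{a\<in>insert b A. t < z a} = {a\<in>A. t < z a}"
      by auto
    with insert False show ?thesis
      by (simp add: abs_if)
  qed
qed simp

definition sign_changes :: "(nat \<Rightarrow> real) \<Rightarrow> nat \<Rightarrow> nat set" where
  "sign_changes s L = {i. 0 < i \<and> i < L \<and> s (i - 1) \<noteq> s i}"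

lemma sign_changes_subset: "sign_changes s L \<subseteq> {1..<L}"
  by (auto simp: sign_changes_def)

lemma finite_sign_changes [simp]: "finite (sign_changes s L)"
  using sign_changes_subset by (rule finite_subset) simp

lemma card_sign_changes_less:
  assumes "0 < L"
  shows "card (sign_changes s L) < L"
proof -
  have "card (sign_changes s L) \<le> card {1..<L}"
    by (rule card_mono[OF finite_atLeastLessThan sign_changes_subset])
  with assms show ?thesis
    by simp
qed

lemma sign_alternation:
  fixes s :: "nat \<Rightarrow> real"
  assumes s: "\<And>i. \<bar>s i\<bar> = 1" and "l < L"
  shows "s l = s (L - 1) * (-1) ^ card {i \<in> sign_changes s L. l < i}"
proof -
  have "Suc l \<le> L"
    using \<open>l < L\<close> by simp
  then show ?thesis
  proof (induction L rule: dec_induct)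
    case base
    have no_changes: "{i \<in> sign_changes s (Suc l). l < i} = {}"
      by (auto simp: sign_changes_def)
    show ?case
      by (simp add: no_changes)
  next
    case (step n)
    show ?case
    proof (cases "s (n - 1) = s n")
      case True
      then have "{i \<in> sign_changes s (Suc n). l < i} = {i \<in> sign_changes s n. l < i}"
        by (auto simp: sign_changes_def less_Suc_eq)
      with step.IH True show ?thesis
        by simp
    next
      case False
      then have "s n = - s (n - 1)"
        using s[of n] s[of "n - 1"] by (auto simp: abs_if split: if_splits)
      moreover have "{i \<in> sign_changes s (Suc n). l < i} = insert n {i \<in> sign_changes s n. l < i}"
        using False step.hyps by (auto simp: sign_changes_def less_Suc_eq)
      moreover have "n \<notin> sign_changes s n"
        by (simp add: sign_changes_def)
      ultimately show ?thesis
        using step.IH by simp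
    qed
  qed
qed

definition sign_pattern_poly :: "(nat \<Rightarrow> real) \<Rightarrow> (nat \<Rightarrow> real) \<Rightarrow> nat \<Rightarrow> real poly" where
  "sign_pattern_poly x s L = smult (s (L - 1)) (\<Prod>i\<in>sign_changes s L. [:- x i, 1:])"

lemma sign_pattern_poly_on_gap:
  assumes x: "strict_mono_on {..L} x" and s: "\<And>i. \<bar>s i\<bar> = 1"
    and "l < L" "x l < t" "t < x (Suc l)"
  shows "s l * poly (sign_pattern_poly x s L) t = (\<Prod>i\<in>sign_changes s L. \<bar>t - x i\<bar>)"
proof -
  have "{i \<in> sign_changes s L. t < x i} = {i \<in> sign_changes s L. l < i}"
  proof (intro Collect_cong conj_cong refl iffI)
    fix i
    assume i: "i \<in> sign_changes s L" "t < x i"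
    show "l < i"
    proof (rule ccontr)
      assume "\<not> l < i"
      then have "x i \<le> x l"
        using i(1) \<open>l < L\<close>
        by (cases "i = l") (auto simp: sign_changes_def intro!: less_imp_le strict_mono_onD[OF x])
      with i(2) \<open>x l < t\<close> show False
        by simp
    qed
  next
    fix i
    assume "i \<in> sign_changes s L" "l < i"
    then have "x (Suc l) \<le> x i"
      by (cases "i = Suc l") (auto simp: sign_changes_def intro!: less_imp_le strict_mono_onD[OF x])
    with \<open>t < x (Suc l)\<close> show "t < x i"
      by simp
  qed
  then have "poly (sign_pattern_poly x s L) t
      = s (L - 1) * (-1) ^ card {i \<in> sign_changes s L. l < i} * (\<Prod>i\<in>sign_changes s L. \<bar>t - x i\<bar>)"
    by (simp add: sign_pattern_poly_def poly_prod prod_diff_eq_sign_prod_abs)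
  also have "s (L - 1) * (-1) ^ card {i \<in> sign_changes s L. l < i} = s l"
    using sign_alternation[of s, OF s \<open>l < L\<close>] by simp
  finally show ?thesis
    using s[of l] by (simp add: abs_if split: if_splits)
qed

lemma degree_sign_pattern_poly_le: "degree (sign_pattern_poly x s L) \<le> card (sign_changes s L)"
proof -
  have "degree (\<Prod>i\<in>sign_changes s L. [:- x i, 1:]) \<le> (\<Sum>i\<in>sign_changes s L. 1)"
    using degree_prod_sum_le[of "sign_changes s L" "\<lambda>i. [:- x i, 1:]"] by (simp add: o_def)
  then show ?thesis
    unfolding sign_pattern_poly_def by (simp add: order.trans[OF degree_smult_le])
qed

lemma sum_abs_coeff_sign_pattern_poly_le:
  assumes "\<And>i. i < L \<Longrightarrow> \<bar>x i\<bar> \<le> 1" and "\<And>i. \<bar>s i\<bar> = 1"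
  shows "(\<Sum>r\<le>n. \<bar>coeff (sign_pattern_poly x s L) r\<bar>) \<le> 2 ^ card (sign_changes s L)"
  using assms sign_changes_subset[of s L]
  by (auto simp: sign_pattern_poly_def abs_mult simp flip: sum_distrib_left
      intro!: sum_abs_coeff_prod_linear_le)

lemma prod_abs_diff_ge:
  fixes x :: "'a \<Rightarrow> real"
  assumes "0 \<le> d" and outside: "\<And>i. i \<in> Z \<Longrightarrow> x i \<le> a \<or> b \<le> x i"
    and "a + d \<le> t" "t \<le> b - d"
  shows "d ^ card Z \<le> (\<Prod>i\<in>Z. \<bar>t - x i\<bar>)"
proof -
  have "(\<Prod>i\<in>Z. d) \<le> (\<Prod>i\<in>Z. \<bar>t - x i\<bar>)"
  proof (rule prod_mono)
    fix i
    assume "i \<in> Z"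
    then consider "x i \<le> a" | "b \<le> x i"
      using outside by blast
    then show "0 \<le> d \<and> d \<le> \<bar>t - x i\<bar>"
      by cases (use assms in auto)
  qed
  then show ?thesis
    by simp
qed

lemma DERIV_increment_ge:
  fixes f f' :: "real \<Rightarrow> real"
  assumes "a < a'" "a' < b'" "b' < b"
    and der: "\<And>t. DERIV f t :> f' t"
    and nonneg: "\<And>t. a < t \<Longrightarrow> t < b \<Longrightarrow> 0 \<le> f' t"
    and lower: "\<And>t. a' \<le> t \<Longrightarrow> t \<le> b' \<Longrightarrow> c \<le> f' t"
  shows "(b' - a') * c \<le> f b - f a"
proof -
  obtain t1 where t1: "a < t1" "t1 < a'" "f a' - f a = (a' - a) * f' t1"
    using MVT2[OF \<open>a < a'\<close> der] by blast
  obtain t2 where t2: "a' < t2" "t2 < b'" "f b' - f a' = (b' - a') * f' t2"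
    using MVT2[OF \<open>a' < b'\<close> der] by blast
  obtain t3 where t3: "b' < t3" "t3 < b" "f b - f b' = (b - b') * f' t3"
    using MVT2[OF \<open>b' < b\<close> der] by blast
  have "0 \<le> (a' - a) * f' t1" "0 \<le> (b - b') * f' t3"
    using assms t1 t3 by (auto intro!: mult_nonneg_nonneg nonneg)
  moreover have "(b' - a') * c \<le> (b' - a') * f' t2"
    using assms t2 by (intro mult_left_mono lower) auto
  ultimately show ?thesis
    using t1 t2 t3 by linarith
qed

lemma sign_pattern_antideriv_increment:
  assumes x: "strict_mono_on {..L} x" and s: "\<And>i. \<bar>s i\<bar> = 1" and "l < L"
  defines "P \<equiv> poly_antideriv (sign_pattern_poly x s L)" and "h \<equiv> x (Suc l) - x l"
  shows "h / 2 * (h / 4) ^ card (sign_changes s L) \<le> s l * (poly P (x (Suc l)) - poly P (x l))"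
proof -
  let ?p = "sign_pattern_poly x s L"
  have "0 < h"
    using \<open>l < L\<close> by (simp add: h_def strict_mono_onD[OF x])
  have outside: "x i \<le> x l \<or> x (Suc l) \<le> x i" if "i \<in> sign_changes s L" for i
  proof (cases "i \<le> l")
    case True
    then show ?thesis
      using \<open>l < L\<close> by (simp add: strict_mono_on_leD[OF x])
  next
    case False
    then show ?thesis
      using that by (simp add: sign_changes_def strict_mono_on_leD[OF x])
  qed
  have "(x (Suc l) - h / 4 - (x l + h / 4)) * (h / 4) ^ card (sign_changes s L)
      \<le> s l * poly P (x (Suc l)) - s l * poly P (x l)"
  proof (rule DERIV_increment_ge[where f="\<lambda>t. s l * poly P t" and f'="\<lambda>t. s l * poly ?p t"])
    show "DERIV (\<lambda>t. s l * poly P t) t :> s l * poly ?p t" for t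
      unfolding P_def by (auto intro!: derivative_eq_intros simp: pderiv_poly_antideriv)
    show "0 \<le> s l * poly ?p t" if "x l < t" "t < x (Suc l)" for t
      using sign_pattern_poly_on_gap[where s=s, OF x s \<open>l < L\<close> that] by (simp add: prod_nonneg)
    show "(h / 4) ^ card (sign_changes s L) \<le> s l * poly ?p t"
      if "x l + h / 4 \<le> t" "t \<le> x (Suc l) - h / 4" for t
    proof -
      have "x l < t" "t < x (Suc l)"
        using that \<open>0 < h\<close> by auto
      then show ?thesis
        using that \<open>0 < h\<close> outside
        by (simp add: sign_pattern_poly_on_gap[where s=s, OF x s \<open>l < L\<close>]
            prod_abs_diff_ge[where a="x l" and b="x (Suc l)"])
    qed
  qed (use \<open>0 < h\<close> in \<open>auto simp: h_def field_simps\<close>)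
  moreover have "x (Suc l) - h / 4 - (x l + h / 4) = h / 2"
    by (simp add: h_def field_simps)
  ultimately show ?thesis
    by (simp add: right_diff_distrib)
qed

section \<open>Partial sums of a signed measure with small moments\<close>

lemma summation_by_parts:
  fixes w y :: "nat \<Rightarrow> 'a::comm_ring"
  shows "(\<Sum>i<Suc n. w i * y i)
    = (\<Sum>i<Suc n. w i) * y n - (\<Sum>l<n. (\<Sum>i<Suc l. w i) * (y (Suc l) - y l))"
  by (induction n) (simp_all add: algebra_simps)

lemma gap_power_bound:
  fixes g h \<delta> :: real
  assumes "0 \<le> g" "0 \<le> h" "h \<le> 2" "c < N"
    and main: "g * (h / 2 * (h / 4) ^ c) \<le> 2 ^ c * \<delta>"
  shows "g * h ^ N \<le> 8 ^ N * \<delta>"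
proof -
  have "0 \<le> 2 ^ c * \<delta>"
    using assms by (meson order.trans main mult_nonneg_nonneg divide_nonneg_pos zero_le_power zero_less_numeral)
  then have "0 \<le> \<delta>"
    by (simp add: zero_le_mult_iff) (use zero_less_power[of "2::real" c] in linarith)
  have "g * h ^ Suc c = 2 * 4 ^ c * (g * (h / 2 * (h / 4) ^ c))"
    by (simp add: power_divide field_simps)
  also have "\<dots> \<le> 2 * 4 ^ c * (2 ^ c * \<delta>)"
    using main by simp
  also have "\<dots> = 2 * 8 ^ c * \<delta>"
    by (simp flip: power_mult_distrib)
  finally have short: "g * h ^ Suc c \<le> 2 * 8 ^ c * \<delta>" .
  have N: "Suc c + (N - Suc c) = N"
    using \<open>c < N\<close> by simp
  have "g * h ^ N = g * h ^ Suc c * h ^ (N - Suc c)"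
    by (metis N mult.assoc power_add)
  also have "\<dots> \<le> 2 * 8 ^ c * \<delta> * 2 ^ (N - Suc c)"
    by (rule mult_mono[OF short power_mono]) (use assms \<open>0 \<le> \<delta>\<close> in simp_all)
  also have "\<dots> = 2 ^ (N + 2 * c) * \<delta>"
  proof -
    have "(2::real) * 8 ^ c * 2 ^ (N - Suc c) = 2 ^ (Suc (3 * c) + (N - Suc c))"
      by (simp add: power_add power_mult)
    also have "Suc (3 * c) + (N - Suc c) = N + 2 * c"
      using \<open>c < N\<close> by simp
    finally show ?thesis
      by simp
  qed
  also have "\<dots> \<le> 2 ^ (3 * N) * \<delta>"
    using \<open>c < N\<close> \<open>0 \<le> \<delta>\<close> by (intro mult_right_mono power_increasing) simp_all
  also have "\<dots> = 8 ^ N * \<delta>"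
    by (simp add: power_mult)
  finally show ?thesis .
qed

lemma mult_le_root_bound:
  fixes g h a \<delta> :: real
  assumes "0 \<le> g" "g \<le> 1" "0 \<le> h" "0 < a" "0 < N"
    and bound: "g * h ^ N \<le> a ^ N * \<delta>"
  shows "g * h \<le> a * \<delta> powr (1 / real N)"
proof -
  have "0 \<le> a ^ N * \<delta>"
    using assms by (meson order.trans bound mult_nonneg_nonneg zero_le_power)
  then have "0 \<le> \<delta>"
    by (simp add: zero_le_mult_iff) (use zero_less_power[of a N] assms in linarith)
  have "(g * h) ^ N = g ^ N * h ^ N"
    by (simp add: power_mult_distrib)
  also have "\<dots> \<le> g * h ^ N"
    by (rule mult_right_mono[OF power_decreasing[of 1 N g, simplified]]) (use assms in simp_all)
  also have "\<dots> \<le> (a * root N \<delta>) ^ N"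
    using bound assms \<open>0 \<le> \<delta>\<close> by (simp add: power_mult_distrib real_root_pow_pos2)
  finally have "g * h \<le> a * root N \<delta>"
    using assms \<open>0 \<le> \<delta>\<close> by (simp add: power_mono_iff)
  then show ?thesis
    using assms \<open>0 \<le> \<delta>\<close> by (simp add: root_powr_inverse)
qed

lemma abs_sum_sign_pattern_antideriv_le:
  fixes x s w :: "nat \<Rightarrow> real"
  assumes "0 < L" "\<And>i. i < L \<Longrightarrow> \<bar>x i\<bar> \<le> 1" "\<And>i. \<bar>s i\<bar> = 1"
    and moments: "\<And>r. r \<le> L \<Longrightarrow> \<bar>\<Sum>i\<in>I. w i * x i ^ r\<bar> \<le> \<delta>"
  shows "\<bar>\<Sum>i\<in>I. w i * poly (poly_antideriv (sign_pattern_poly x s L)) (x i)\<bar>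
    \<le> 2 ^ card (sign_changes s L) * \<delta>"
proof -
  let ?p = "sign_pattern_poly x s L" and ?c = "card (sign_changes s L)"
  have "0 \<le> \<delta>"
    using moments[of 0] by (simp add: order.trans[OF abs_ge_zero])
  have "?c < L"
    using \<open>0 < L\<close> by (rule card_sign_changes_less)
  then have "degree (poly_antideriv ?p) \<le> L"
    using degree_poly_antideriv_le[of ?p] degree_sign_pattern_poly_le[of x s L] by simp
  then have "\<bar>\<Sum>i\<in>I. w i * poly (poly_antideriv ?p) (x i)\<bar>
      \<le> (\<Sum>r\<le>Suc (L - 1). \<bar>coeff (poly_antideriv ?p) r\<bar>) * \<delta>"
    using \<open>?c < L\<close> moments by (simp add: abs_sum_poly_le_moment_bound)
  also have "\<dots> \<le> (\<Sum>r\<le>L - 1. \<bar>coeff ?p r\<bar>) * \<delta>"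
    using \<open>0 \<le> \<delta>\<close> by (intro mult_right_mono sum_abs_coeff_poly_antideriv_le)
  also have "\<dots> \<le> 2 ^ ?c * \<delta>"
    using \<open>0 \<le> \<delta>\<close> assms by (intro mult_right_mono sum_abs_coeff_sign_pattern_poly_le) auto
  finally show ?thesis .
qed

lemma partial_sum_gap_le_test_sum:
  fixes x w :: "nat \<Rightarrow> real"
  assumes x: "strict_mono_on {..L} x" and sum_w: "(\<Sum>i<Suc L. w i) = 0" and "l < L"
    and s: "\<And>j. \<bar>s j\<bar> = 1" "\<And>j. \<bar>\<Sum>i<Suc j. w i\<bar> = s j * (\<Sum>i<Suc j. w i)"
  defines "P \<equiv> poly_antideriv (sign_pattern_poly x s L)"
  shows "\<bar>\<Sum>i<Suc l. w i\<bar> * ((x (Suc l) - x l) / 2 * ((x (Suc l) - x l) / 4) ^ card (sign_changes s L))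
    \<le> - (\<Sum>i<Suc L. w i * poly P (x i))"
proof -
  define D where "D j = (\<Sum>i<Suc j. w i) * (poly P (x (Suc j)) - poly P (x j))" for j
  define lower where "lower j = \<bar>\<Sum>i<Suc j. w i\<bar>
    * ((x (Suc j) - x j) / 2 * ((x (Suc j) - x j) / 4) ^ card (sign_changes s L))" for j
  have lower_le_D: "lower j \<le> D j" if "j < L" for j
  proof -
    have "lower j \<le> \<bar>\<Sum>i<Suc j. w i\<bar> * (s j * (poly P (x (Suc j)) - poly P (x j)))"
      unfolding lower_def P_def
      by (intro mult_left_mono sign_pattern_antideriv_increment[where s=s, OF x s(1) that]) simp
    also have "\<dots> = (s j * s j) * D j"
      unfolding D_def s(2)[of j] by (simp only: ac_simps)
    also have "s j * s j = 1"
      using s(1)[of j] by (metis abs_mult_self_eq mult_1)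
    finally show ?thesis
      by simp
  qed
  have D_nonneg: "0 \<le> D j" if "j < L" for j
  proof -
    have "x j < x (Suc j)"
      using that by (simp add: strict_mono_onD[OF x])
    then have "0 \<le> lower j"
      by (simp add: lower_def)
    with lower_le_D[OF that] show ?thesis
      by linarith
  qed
  have "(\<Sum>i<Suc L. w i * poly P (x i)) = - (\<Sum>j<L. D j)"
    using summation_by_parts[of w "\<lambda>i. poly P (x i)" L] sum_w by (simp add: D_def)
  moreover have "D l \<le> (\<Sum>j<L. D j)"
    using \<open>l < L\<close> D_nonneg by (intro member_le_sum) auto
  ultimately show ?thesis
    using lower_le_D[OF \<open>l < L\<close>] by (simp add: lower_def)
qed

lemma partial_sum_gap_bound:
  fixes x w :: "nat \<Rightarrow> real"
  assumes x: "strict_mono_on {..<m} x" "\<And>i. i < m \<Longrightarrow> \<bar>x i\<bar> \<le> 1"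
    and sum_w: "(\<Sum>i<m. w i) = 0"
    and moments: "\<And>r. 1 \<le> r \<Longrightarrow> r \<le> N \<Longrightarrow> \<bar>\<Sum>i<m. w i * x i ^ r\<bar> \<le> \<delta>"
    and "m \<le> N + 1" "Suc l < m"
  shows "\<bar>\<Sum>i<Suc l. w i\<bar> * (x (Suc l) - x l) ^ N \<le> 8 ^ N * \<delta>"
proof -
  define L where "L = m - 1"
  have m: "m = Suc L" "l < L" "L \<le> N"
    using assms by (auto simp: L_def)
  define s where "s j = (if 0 \<le> (\<Sum>i<Suc j. w i) then 1 else -1 :: real)" for j
  define c where "c = card (sign_changes s L)"
  have all_moments: "\<bar>\<Sum>i<m. w i * x i ^ r\<bar> \<le> \<delta>" if "r \<le> L" for r
  proof (cases "r = 0")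
    case True
    have "\<bar>\<Sum>i<m. w i * x i ^ 1\<bar> \<le> \<delta>"
      using m by (intro moments) auto
    then show ?thesis
      using True sum_w by simp
  next
    case False
    then show ?thesis
      using that m by (intro moments) auto
  qed
  have "\<bar>\<Sum>i<Suc l. w i\<bar> * ((x (Suc l) - x l) / 2 * ((x (Suc l) - x l) / 4) ^ c)
      \<le> - (\<Sum>i<m. w i * poly (poly_antideriv (sign_pattern_poly x s L)) (x i))"
    using x(1) sum_w m unfolding c_def m(1)
    by (intro partial_sum_gap_le_test_sum) (auto simp: strict_mono_on_def s_def)
  also have "\<dots> \<le> 2 ^ c * \<delta>"
  proof -
    have "\<bar>\<Sum>i<m. w i * poly (poly_antideriv (sign_pattern_poly x s L)) (x i)\<bar> \<le> 2 ^ c * \<delta>"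
      unfolding c_def
      by (rule abs_sum_sign_pattern_antideriv_le) (use m x(2) all_moments in \<open>auto simp: s_def\<close>)
    then show ?thesis
      by linarith
  qed
  finally show ?thesis
    using strict_mono_onD[OF x(1), of l "Suc l"] x(2)[of l] x(2)[of "Suc l"] m
      card_sign_changes_less[of L s]
    by (intro gap_power_bound) (auto simp: c_def)
qed

lemma moment_map_pmf_finite:
  assumes "finite A" "set_pmf p \<subseteq> A"
  shows "moment r (map_pmf x p) = (\<Sum>i\<in>A. pmf p i * x i ^ r)"
  unfolding moment_def using assms
  by (subst integral_map_pmf, subst integral_measure_pmf_real) (auto simp: mult.commute)

lemma W1_grid_moment_bound:
  fixes p q :: "nat pmf" and x :: "nat \<Rightarrow> real"
  assumes x: "strict_mono_on {..<m} x" "\<And>i. i < m \<Longrightarrow> \<bar>x i\<bar> \<le> 1"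
    and p: "set_pmf p \<subseteq> {..<m}" and q: "set_pmf q \<subseteq> {..<m}"
    and "m \<le> N + 1" "0 < N"
    and moments: "\<And>r. 1 \<le> r \<Longrightarrow> r \<le> N \<Longrightarrow> \<bar>moment r (map_pmf x p) - moment r (map_pmf x q)\<bar> \<le> \<delta>"
  shows "W1 (map_pmf x p) (map_pmf x q) \<le> 8 * real (m - 1) * \<delta> powr (1 / real N)"
proof -
  define w where "w i = pmf p i - pmf q i" for i
  have cumulative_diff: "cumulative p j - cumulative q j = (\<Sum>i<j. w i)" for j
    by (simp add: cumulative_def w_def sum_subtractf)
  have "(\<Sum>i<m. w i) = 0"
    using p q by (simp flip: cumulative_diff add: cumulative_eq_1)
  moreover have "\<bar>\<Sum>i<m. w i * x i ^ r\<bar> \<le> \<delta>" if "1 \<le> r" "r \<le> N" for r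
  proof -
    have "(\<Sum>i<m. w i * x i ^ r) = moment r (map_pmf x p) - moment r (map_pmf x q)"
      by (simp add: moment_map_pmf_finite[OF _ p] moment_map_pmf_finite[OF _ q] w_def
          left_diff_distrib sum_subtractf)
    with moments[OF that] show ?thesis
      by simp
  qed
  ultimately have gap_bound: "\<bar>\<Sum>i<Suc l. w i\<bar> * (x (Suc l) - x l) ^ N \<le> 8 ^ N * \<delta>"
    if "l < m - 1" for l
    using that x \<open>m \<le> N + 1\<close> by (intro partial_sum_gap_bound) auto
  have "W1 (map_pmf x p) (map_pmf x q) \<le> (\<Sum>l<m - 1. \<bar>x (Suc l) - x l\<bar> * \<bar>\<Sum>i<Suc l. w i\<bar>)"
    using W1_map_pmf_le_sum_gaps[OF p q] by (simp add: cumulative_diff)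
  also have "\<dots> \<le> (\<Sum>l<m - 1. 8 * \<delta> powr (1 / real N))"
  proof (rule sum_mono)
    fix l
    assume "l \<in> {..<m - 1}"
    then have "l < m - 1"
      by simp
    then have "x l < x (Suc l)"
      by (auto intro: strict_mono_onD[OF x(1)])
    moreover have "\<bar>cumulative p (Suc l) - cumulative q (Suc l)\<bar> \<le> 1"
      using cumulative_le_1[of p "Suc l"] cumulative_le_1[of q "Suc l"] cumulative_nonneg[of p "Suc l"]
        cumulative_nonneg[of q "Suc l"]
      by (simp add: abs_le_iff)
    then have "\<bar>\<Sum>i<Suc l. w i\<bar> \<le> 1"
      by (simp add: cumulative_diff)
    ultimately show "\<bar>x (Suc l) - x l\<bar> * \<bar>\<Sum>i<Suc l. w i\<bar> \<le> 8 * \<delta> powr (1 / real N)"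
      using gap_bound[OF \<open>l < m - 1\<close>] \<open>0 < N\<close>
      by (subst mult.commute) (intro mult_le_root_bound; simp)
  qed
  finally show ?thesis
    by simp
qed

section \<open>Reduction to a common grid\<close>

lemma finite_set_strict_mono_enumeration:
  fixes S :: "'a::linorder set"
  assumes "finite S"
  obtains x where "strict_mono_on {..<card S} x" "x ` {..<card S} = S"
proof
  let ?xs = "sorted_list_of_set S"
  have length: "length ?xs = card S"
    by simp
  show "strict_mono_on {..<card S} ((!) ?xs)"
  proof (rule strict_mono_onI)
    fix r s
    assume "r \<in> {..<card S}" "s \<in> {..<card S}" "r < s"
    then show "?xs ! r < ?xs ! s"
      using length by (intro sorted_wrt_nth_less[OF sorted_list_of_set.strict_sorted_key_list_of_set]) auto
  qed
  have "(!) ?xs ` {..<card S} = set ?xs"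
    using length by (auto simp: set_conv_nth)
  then show "(!) ?xs ` {..<card S} = S"
    using assms by simp
qed

lemma map_pmf_preimage:
  assumes "inj_on f A" "set_pmf \<mu> \<subseteq> f ` A"
  obtains p where "set_pmf p \<subseteq> A" "\<mu> = map_pmf f p"
proof
  show "set_pmf (map_pmf (the_inv_into A f) \<mu>) \<subseteq> A"
    using assms by (auto intro: the_inv_into_into)
  have "map_pmf f (map_pmf (the_inv_into A f) \<mu>) = map_pmf id \<mu>"
    unfolding map_pmf_comp using assms by (intro map_pmf_cong) (auto simp: f_the_inv_into_f)
  then show "\<mu> = map_pmf f (map_pmf (the_inv_into A f) \<mu>)"
    by simp
qed

lemma common_grid_representation:
  fixes \<nu> \<nu>' :: "'a::linorder pmf"
  assumes "finite (set_pmf \<nu>)" "finite (set_pmf \<nu>')"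
  defines "m \<equiv> card (set_pmf \<nu> \<union> set_pmf \<nu>')"
  obtains x p q where "strict_mono_on {..<m} x" "x ` {..<m} = set_pmf \<nu> \<union> set_pmf \<nu>'"
    "set_pmf p \<subseteq> {..<m}" "set_pmf q \<subseteq> {..<m}" "\<nu> = map_pmf x p" "\<nu>' = map_pmf x q"
proof -
  obtain x where x: "strict_mono_on {..<m} x" "x ` {..<m} = set_pmf \<nu> \<union> set_pmf \<nu>'"
    using finite_set_strict_mono_enumeration[of "set_pmf \<nu> \<union> set_pmf \<nu>'"] assms by auto
  have inj: "inj_on x {..<m}"
    using x(1) by (rule strict_mono_on_imp_inj_on)
  have "set_pmf \<nu> \<subseteq> x ` {..<m}" "set_pmf \<nu>' \<subseteq> x ` {..<m}"
    using x(2) by auto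
  then obtain p q where p: "set_pmf p \<subseteq> {..<m}" "\<nu> = map_pmf x p"
    and q: "set_pmf q \<subseteq> {..<m}" "\<nu>' = map_pmf x q"
    by (elim map_pmf_preimage[OF inj])
  show ?thesis
    by (rule that[OF x p(1) q(1) p(2) q(2)])
qed

theorem proposition1:
  shows "\<exists>C::real. \<forall>(k::nat) (\<nu>::real pmf) (\<nu>'::real pmf) (\<delta>::real).
     k_atomic k \<nu> \<and> k_atomic k \<nu>' \<and>
     set_pmf \<nu> \<subseteq> {-1..1} \<and> set_pmf \<nu>' \<subseteq> {-1..1} \<and>
     (\<forall>i\<in>{1..2*k-1}. \<bar>moment i \<nu> - moment i \<nu>'\<bar> \<le> \<delta>)
     \<longrightarrow> W1 \<nu> \<nu>' \<le> C * real k * \<delta> powr (1 / (2 * real k - 1))"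
proof (intro exI[of _ 16] allI impI, elim conjE)
  fix k :: nat and \<nu> \<nu>' :: "real pmf" and \<delta> :: real
  assume atomic: "k_atomic k \<nu>" "k_atomic k \<nu>'"
    and range: "set_pmf \<nu> \<subseteq> {-1..1}" "set_pmf \<nu>' \<subseteq> {-1..1}"
    and moments: "\<forall>i\<in>{1..2*k-1}. \<bar>moment i \<nu> - moment i \<nu>'\<bar> \<le> \<delta>"
  define m where "m = card (set_pmf \<nu> \<union> set_pmf \<nu>')"
  have "m \<le> 2 * k"
    using atomic card_Un_le[of "set_pmf \<nu>" "set_pmf \<nu>'"] by (auto simp: m_def k_atomic_def)
  have "1 \<le> k"
    using atomic(1) set_pmf_not_empty[of \<nu>] by (auto simp: k_atomic_def card_gt_0_iff Suc_le_eq)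
  have "finite (set_pmf \<nu>)" "finite (set_pmf \<nu>')"
    using atomic by (simp_all add: k_atomic_def)
  then obtain x p q where x: "strict_mono_on {..<m} x" "x ` {..<m} = set_pmf \<nu> \<union> set_pmf \<nu>'"
    and p: "set_pmf p \<subseteq> {..<m}" "\<nu> = map_pmf x p" and q: "set_pmf q \<subseteq> {..<m}" "\<nu>' = map_pmf x q"
    unfolding m_def by (rule common_grid_representation)
  have "W1 \<nu> \<nu>' \<le> 8 * real (m - 1) * \<delta> powr (1 / real (2 * k - 1))"
    unfolding p(2) q(2)
  proof (rule W1_grid_moment_bound[OF x(1) _ p(1) q(1)])
    show "\<bar>x i\<bar> \<le> 1" if "i < m" for i
      using that x(2) range by (force simp: abs_le_iff)
    show "\<bar>moment r (map_pmf x p) - moment r (map_pmf x q)\<bar> \<le> \<delta>" if "1 \<le> r" "r \<le> 2 * k - 1" for r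
      using that moments by (simp flip: p(2) q(2))
  qed (use \<open>m \<le> 2 * k\<close> \<open>1 \<le> k\<close> in simp_all)
  also have "\<dots> = 8 * real (m - 1) * \<delta> powr (1 / (2 * real k - 1))"
    using \<open>1 \<le> k\<close> by (simp add: of_nat_diff)
  also have "\<dots> \<le> 16 * real k * \<delta> powr (1 / (2 * real k - 1))"
    using \<open>m \<le> 2 * k\<close> by (intro mult_right_mono) simp_all
  finally show "W1 \<nu> \<nu>' \<le> 16 * real k * \<delta> powr (1 / (2 * real k - 1))" .
qed

end
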